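(* Let $W=XYZ+XZY$ and $\mathbb{M}^W_{3,2}(\lambda)=\{(A_1,A_2,A_3)\in M_2(\mathbb{C})^3: Tr(W(A_1,A_2,A_3))=\lambda\}$. Then \[[\mathbb{M}^W_{3,2}(1)]=\mathbb{L}^{11}-\mathbb{L}^8-3\mathbb{L}^7+2\mathbb{L}^6+2\mathbb{L}^5-\mathbb{L}^4,\qquad [\mathbb{M}^W_{3,2}(0)]=\mathbb{L}^{11}+\mathbb{L}^9+2\mathbb{L}^8-5\mathbb{L}^7+3\mathbb{L}^5-\mathbb{L}^4,\] and consequently $[\mathbb{M}^W_{3,2}(0)]-[\mathbb{M}^W_{3,2}(1)]=\mathbb{L}^4(\mathbb{L}^5+3\mathbb{L}^4-2\mathbb{L}^3-2\mathbb{L}^2+\mathbb{L})$.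
   Context: Classes are motives in the Grothendieck ring of complex varieties, $\mathbb{L}=[\mathbb{A}^1]$. *)

theory Defs
  imports Complex_Main
begin

type_synonym pt = "nat \<Rightarrow> complex"

definition aff :: "nat \<Rightarrow> pt set" where
  "aff n = {x. \<forall>i\<ge>n. x i = 0}"

inductive_set polyfun :: "nat \<Rightarrow> (pt \<Rightarrow> complex) set" for n :: nat where
  pf_const: "(\<lambda>x. c) \<in> polyfun n"
| pf_coord: "i < n \<Longrightarrow> (\<lambda>x. x i) \<in> polyfun n"
| pf_add: "f \<in> polyfun n \<Longrightarrow> g \<in> polyfun n \<Longrightarrow> (\<lambda>x. f x + g x) \<in> polyfun n"
| pf_mult: "f \<in> polyfun n \<Longrightarrow> g \<in> polyfun n \<Longrightarrow> (\<lambda>x. f x * g x) \<in> polyfun n"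

definition zclosed :: "nat \<Rightarrow> pt set \<Rightarrow> bool" where
  "zclosed n C \<longleftrightarrow> (\<exists>F. finite F \<and> F \<subseteq> polyfun n \<and> C = {x \<in> aff n. \<forall>f\<in>F. f x = 0})"

text \<open>Locally closed subsets = quasi-affine varieties (reduced).\<close>
definition locclosed :: "nat \<Rightarrow> pt set \<Rightarrow> bool" where
  "locclosed n X \<longleftrightarrow> (\<exists>C D. zclosed n C \<and> zclosed n D \<and> X = C - D)"

definition morphism :: "nat \<Rightarrow> pt set \<Rightarrow> nat \<Rightarrow> pt set \<Rightarrow> (pt \<Rightarrow> pt) \<Rightarrow> bool" where
  "morphism n X m Y f \<longleftrightarrow> (\<forall>x\<in>X. f x \<in> Y) \<and>
     (\<forall>p\<in>X. \<forall>j<m. \<exists>g h D. g \<in> polyfun n \<and> h \<in> polyfun n \<and> zclosed n D \<and> p \<notin> D \<and>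
        (\<forall>x\<in>X - D. h x \<noteq> 0 \<and> f x j = g x / h x))"

definition isomorphic :: "nat \<Rightarrow> pt set \<Rightarrow> nat \<Rightarrow> pt set \<Rightarrow> bool" where
  "isomorphic n X m Y \<longleftrightarrow> (\<exists>f g. morphism n X m Y f \<and> morphism m Y n X g \<and>
      (\<forall>x\<in>X. g (f x) = x) \<and> (\<forall>y\<in>Y. f (g y) = y))"

text \<open>Free abelian group on (quasi-affine) varieties: finitely supported integer functions.\<close>
type_synonym fgrp = "(nat \<times> pt set) \<Rightarrow> int"

definition gen :: "nat \<Rightarrow> pt set \<Rightarrow> fgrp" where
  "gen n X = (\<lambda>v. if v = (n, X) then 1 else 0)"

inductive_set rels :: "fgrp set" where
  rel_zero: "(\<lambda>v. 0) \<in> rels"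
| rel_iso: "locclosed n X \<Longrightarrow> locclosed m Y \<Longrightarrow> isomorphic n X m Y \<Longrightarrow>
      (\<lambda>v. gen n X v - gen m Y v) \<in> rels"
| rel_cut: "locclosed n X \<Longrightarrow> zclosed n C \<Longrightarrow>
      (\<lambda>v. gen n X v - gen n (X \<inter> C) v - gen n (X - C) v) \<in> rels"
| rel_add: "a \<in> rels \<Longrightarrow> b \<in> rels \<Longrightarrow> (\<lambda>v. a v + b v) \<in> rels"
| rel_neg: "a \<in> rels \<Longrightarrow> (\<lambda>v. - a v) \<in> rels"

definition K0_eq :: "fgrp \<Rightarrow> fgrp \<Rightarrow> bool" where
  "K0_eq a b \<longleftrightarrow> (\<lambda>v. a v - b v) \<in> rels"

definition Lpow :: "nat \<Rightarrow> fgrp" where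
  "Lpow k = gen k (aff k)"

definition Lpoly :: "(nat \<times> int) list \<Rightarrow> fgrp" where
  "Lpoly cs = (\<lambda>v. (\<Sum>(k, c)\<leftarrow>cs. c * Lpow k v))"

definition mmul :: "(nat \<Rightarrow> nat \<Rightarrow> complex) \<Rightarrow> (nat \<Rightarrow> nat \<Rightarrow> complex) \<Rightarrow> nat \<Rightarrow> nat \<Rightarrow> complex" where
  "mmul A B = (\<lambda>i j. \<Sum>k<2. A i k * B k j)"

definition mtr :: "(nat \<Rightarrow> nat \<Rightarrow> complex) \<Rightarrow> complex" where
  "mtr A = (\<Sum>i<2. A i i)"

definition mat_of :: "nat \<Rightarrow> pt \<Rightarrow> nat \<Rightarrow> nat \<Rightarrow> complex" where
  "mat_of k x = (\<lambda>i j. x (4 * k + 2 * i + j))"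

definition trW :: "pt \<Rightarrow> complex" where
  "trW x = mtr (mmul (mmul (mat_of 0 x) (mat_of 1 x)) (mat_of 2 x))
         + mtr (mmul (mmul (mat_of 0 x) (mat_of 2 x)) (mat_of 1 x))"

definition MW :: "complex \<Rightarrow> pt set" where
  "MW lam = {x \<in> aff 12. trW x = lam}"

end

theory Submission
  imports Defs "HOL-Computational_Algebra.Polynomial"
begin

(* Write A1, A2, A3 for the three matrices. Since tr W = tr((A1 A2 + A2 A1) A3), the trace is
   linear in A3 with coefficients the entries of the anticommutator S = A1 A2 + A2 A1. Where S is
   nonzero, tr W = lam can be solved for one entry of A3, so that part of M(lam) is a graph over
   the corresponding part of A^8 x A^3 and its class does not depend on lam. Stratifying by the
   first nonzero entry of S, the same pieces together with Z x A^3, where Z in A^8 is the variety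
   of anticommuting pairs, make up A^11. Hence
     [M(lam)] = L^11 - [Z] L^3 + [{(A1, A2, A3) in M(lam) : (A1, A2) in Z}],
   and tr W vanishes when (A1, A2) is in Z, so the last term is [Z] L^4 for lam = 0 and 0 for
   lam = 1.
   Finally [Z] = L^5 + 3 L^4 - 2 L^3 - 2 L^2 + L: after replacing the diagonal entries of A1 and
   A2 by their sums and differences, Z is cut into pieces that are graphs over products of
   tori and affine spaces. *)

subsection \<open>Polynomial functions\<close>

lemma polyfun_neg: "f \<in> polyfun n \<Longrightarrow> (\<lambda>x. - f x) \<in> polyfun n"
  using pf_mult[OF pf_const[of "-1"]] by simp

lemma polyfun_diff: "f \<in> polyfun n \<Longrightarrow> g \<in> polyfun n \<Longrightarrow> (\<lambda>x. f x - g x) \<in> polyfun n"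
  using pf_add[OF _ polyfun_neg] by simp

lemma polyfun_divide_const: "f \<in> polyfun n \<Longrightarrow> (\<lambda>x. f x / c) \<in> polyfun n"
  using pf_mult[OF _ pf_const[of "1 / c"]] by simp

lemma polyfun_power: "f \<in> polyfun n \<Longrightarrow> (\<lambda>x. f x ^ k) \<in> polyfun n"
  by (induction k) (auto intro: pf_const pf_mult)

lemma polyfun_sum:
  "finite I \<Longrightarrow> (\<And>i. i \<in> I \<Longrightarrow> f i \<in> polyfun n) \<Longrightarrow> (\<lambda>x. \<Sum>i\<in>I. f i x) \<in> polyfun n"
  by (induction I rule: finite_induct) (auto intro: pf_const pf_add)

lemma polyfun_prod:
  "finite I \<Longrightarrow> (\<And>i. i \<in> I \<Longrightarrow> f i \<in> polyfun n) \<Longrightarrow> (\<lambda>x. \<Prod>i\<in>I. f i x) \<in> polyfun n"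
  by (induction I rule: finite_induct) (auto intro: pf_const pf_mult)

lemmas polyfun_intros = pf_const pf_coord pf_add pf_mult polyfun_neg polyfun_diff polyfun_power

lemma polyfun_eq_if_coords_eq: "f \<in> polyfun n \<Longrightarrow> \<forall>i<n. x i = y i \<Longrightarrow> f x = f y"
  by (induction rule: polyfun.induct) auto

definition del_coord :: "nat \<Rightarrow> pt \<Rightarrow> pt" where
  "del_coord k x = (\<lambda>i. if i < k then x i else x (Suc i))"

definition ins_coord :: "nat \<Rightarrow> complex \<Rightarrow> pt \<Rightarrow> pt" where
  "ins_coord k a y = (\<lambda>i. if i < k then y i else if i = k then a else y (i - 1))"

lemma del_coord_in_aff: "k \<le> n \<Longrightarrow> x \<in> aff (Suc n) \<Longrightarrow> del_coord k x \<in> aff n"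
  by (auto simp: aff_def del_coord_def)

lemma ins_coord_in_aff: "k \<le> n \<Longrightarrow> y \<in> aff n \<Longrightarrow> ins_coord k a y \<in> aff (Suc n)"
  by (auto simp: aff_def ins_coord_def)

lemma del_ins_coord [simp]: "del_coord k (ins_coord k a y) = y"
  by (auto simp: del_coord_def ins_coord_def)

lemma ins_coord_same [simp]: "ins_coord k a y k = a"
  by (simp add: ins_coord_def)

lemma ins_del_coord: "ins_coord k a (del_coord k x) = x(k := a)"
  by (rule ext) (auto simp: del_coord_def ins_coord_def)

lemma del_coord_low: "i < k \<Longrightarrow> del_coord k x i = x i"
  by (simp add: del_coord_def)

lemma polyfun_del_coord: "f \<in> polyfun n \<Longrightarrow> (\<lambda>x. f (del_coord k x)) \<in> polyfun (Suc n)"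
proof (induction rule: polyfun.induct)
  case (pf_coord i)
  then show ?case
    by (cases "i < k") (auto simp: del_coord_def intro: polyfun.pf_coord)
qed (auto intro: polyfun.pf_const polyfun.pf_add polyfun.pf_mult)

lemma polyfun_ins_coord:
  assumes "f \<in> polyfun (Suc n)" "k \<le> n"
  shows "(\<lambda>y. f (ins_coord k a y)) \<in> polyfun n"
  using assms(1)
proof (induction rule: polyfun.induct)
  case (pf_coord i)
  with assms(2) show ?case
    by (cases "i < k"; cases "i = k")
      (simp_all add: ins_coord_def polyfun.pf_coord polyfun.pf_const)
qed (simp_all add: polyfun.pf_const polyfun.pf_add polyfun.pf_mult)

subsection \<open>Zariski closed sets and locally closed loci\<close>

lemma zclosed_zero_set: "f \<in> polyfun n \<Longrightarrow> zclosed n {x \<in> aff n. f x = 0}"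
  unfolding zclosed_def by (rule exI[of _ "{f}"]) auto

lemma zclosed_empty: "zclosed n {}"
  unfolding zclosed_def by (rule exI[of _ "{\<lambda>x. 1}"]) (auto intro: pf_const)

lemma zclosed_aff: "zclosed n (aff n)"
  unfolding zclosed_def by (rule exI[of _ "{}"]) auto

lemma zclosed_Int: "zclosed n A \<Longrightarrow> zclosed n B \<Longrightarrow> zclosed n (A \<inter> B)"
proof -
  assume "zclosed n A" "zclosed n B"
  then obtain F G where F: "finite F" "F \<subseteq> polyfun n" "A = {x \<in> aff n. \<forall>f\<in>F. f x = 0}"
    and G: "finite G" "G \<subseteq> polyfun n" "B = {x \<in> aff n. \<forall>g\<in>G. g x = 0}"
    unfolding zclosed_def by blast
  have "A \<inter> B = {x \<in> aff n. \<forall>h\<in>F \<union> G. h x = 0}"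
    unfolding F(3) G(3) by blast
  with F(1,2) G(1,2) show ?thesis
    unfolding zclosed_def by (intro exI[of _ "F \<union> G"]) simp
qed

lemma zclosed_Un: "zclosed n A \<Longrightarrow> zclosed n B \<Longrightarrow> zclosed n (A \<union> B)"
proof -
  assume "zclosed n A" "zclosed n B"
  then obtain F G where F: "finite F" "F \<subseteq> polyfun n" "A = {x \<in> aff n. \<forall>f\<in>F. f x = 0}"
    and G: "finite G" "G \<subseteq> polyfun n" "B = {x \<in> aff n. \<forall>g\<in>G. g x = 0}"
    unfolding zclosed_def by blast
  let ?H = "(\<lambda>(f, g) x. f x * g x) ` (F \<times> G)"
  have "finite ?H" using F(1) G(1) by blast
  moreover have "?H \<subseteq> polyfun n" using F(2) G(2) by (auto intro!: pf_mult)
  moreover have "A \<union> B = {x \<in> aff n. \<forall>h\<in>?H. h x = 0}" unfolding F(3) G(3) by auto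
  ultimately show ?thesis unfolding zclosed_def by (intro exI[of _ ?H]) simp
qed

lemma zclosed_preimage_del_coord:
  assumes "k \<le> n" "zclosed n A"
  shows "zclosed (Suc n) {x \<in> aff (Suc n). del_coord k x \<in> A}"
proof -
  obtain F where F: "finite F" "F \<subseteq> polyfun n" "A = {x \<in> aff n. \<forall>f\<in>F. f x = 0}"
    using assms(2) unfolding zclosed_def by blast
  let ?H = "(\<lambda>f x. f (del_coord k x)) ` F"
  have "finite ?H" using F(1) by blast
  moreover have "?H \<subseteq> polyfun (Suc n)" using F(2) by (auto intro!: polyfun_del_coord)
  moreover have "{x \<in> aff (Suc n). del_coord k x \<in> A} = {x \<in> aff (Suc n). \<forall>h\<in>?H. h x = 0}"
    unfolding F(3) using assms(1) by (auto simp: del_coord_in_aff)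
  ultimately show ?thesis unfolding zclosed_def by (intro exI[of _ ?H]) simp
qed

definition locus :: "nat \<Rightarrow> (pt \<Rightarrow> bool) \<Rightarrow> pt set" where
  "locus n P = {x \<in> aff n. P x}"

lemma locus_cong: "(\<And>x. x \<in> aff n \<Longrightarrow> P x \<longleftrightarrow> Q x) \<Longrightarrow> locus n P = locus n Q"
  by (auto simp: locus_def)

lemma locclosed_locus_zero: "f \<in> polyfun n \<Longrightarrow> locclosed n (locus n (\<lambda>x. f x = 0))"
  unfolding locclosed_def locus_def using zclosed_zero_set zclosed_empty by blast

lemma locclosed_locus_nonzero: "f \<in> polyfun n \<Longrightarrow> locclosed n (locus n (\<lambda>x. f x \<noteq> 0))"
  unfolding locclosed_def locus_def
  by (rule exI[of _ "aff n"], rule exI[of _ "{x \<in> aff n. f x = 0}"])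
     (auto intro: zclosed_zero_set zclosed_aff)

lemma locclosed_locus_eq:
  "f \<in> polyfun n \<Longrightarrow> g \<in> polyfun n \<Longrightarrow> locclosed n (locus n (\<lambda>x. f x = g x))"
  using locclosed_locus_zero[OF polyfun_diff, of f n g] by simp

lemma locclosed_locus_neq:
  "f \<in> polyfun n \<Longrightarrow> g \<in> polyfun n \<Longrightarrow> locclosed n (locus n (\<lambda>x. f x \<noteq> g x))"
  using locclosed_locus_nonzero[OF polyfun_diff, of f n g] by simp

lemma locclosed_locus_conj:
  assumes "locclosed n (locus n P)" "locclosed n (locus n Q)"
  shows "locclosed n (locus n (\<lambda>x. P x \<and> Q x))"
proof -
  obtain C1 D1 C2 D2 where cd: "zclosed n C1" "zclosed n D1" "locus n P = C1 - D1"
    "zclosed n C2" "zclosed n D2" "locus n Q = C2 - D2"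
    using assms unfolding locclosed_def by blast
  have "locus n (\<lambda>x. P x \<and> Q x) = (C1 \<inter> C2) - (D1 \<union> D2)"
    using cd(3,6) unfolding locus_def by blast
  moreover have "zclosed n (C1 \<inter> C2)" "zclosed n (D1 \<union> D2)"
    by (intro zclosed_Int zclosed_Un cd(1,2,4,5))+
  ultimately show ?thesis unfolding locclosed_def by blast
qed

lemma locclosed_locus_del_coord:
  assumes "k \<le> n" "locclosed n (locus n P)"
  shows "locclosed (Suc n) (locus (Suc n) (\<lambda>x. P (del_coord k x)))"
proof -
  obtain C D where cd: "zclosed n C" "zclosed n D" "locus n P = C - D"
    using assms(2) unfolding locclosed_def by blast
  have "locus (Suc n) (\<lambda>x. P (del_coord k x))
      = {x \<in> aff (Suc n). del_coord k x \<in> C} - {x \<in> aff (Suc n). del_coord k x \<in> D}"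
    using cd(3) del_coord_in_aff[OF assms(1)] unfolding locus_def by blast
  moreover have "zclosed (Suc n) {x \<in> aff (Suc n). del_coord k x \<in> C}"
    "zclosed (Suc n) {x \<in> aff (Suc n). del_coord k x \<in> D}"
    by (intro zclosed_preimage_del_coord assms(1) cd(1,2))+
  ultimately show ?thesis unfolding locclosed_def by blast
qed

lemma locclosed_locus_all_zero:
  assumes "finite I" "\<And>i. i \<in> I \<Longrightarrow> f i \<in> polyfun n"
  shows "locclosed n (locus n (\<lambda>x. \<forall>i\<in>I. f i x = 0))"
proof -
  have "zclosed n {x \<in> aff n. \<forall>i\<in>I. f i x = 0}"
    unfolding zclosed_def using assms by (intro exI[of _ "f ` I"]) auto
  then show ?thesis unfolding locclosed_def locus_def using zclosed_empty by blast
qed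

lemma locclosed_locus_all_nonzero:
  assumes "finite I" "\<And>i. i \<in> I \<Longrightarrow> f i \<in> polyfun n"
  shows "locclosed n (locus n (\<lambda>x. \<forall>i\<in>I. f i x \<noteq> 0))"
proof -
  have "locclosed n (locus n (\<lambda>x. (\<Prod>i\<in>I. f i x) \<noteq> 0))"
    using assms by (intro locclosed_locus_nonzero polyfun_prod)
  also have "locus n (\<lambda>x. (\<Prod>i\<in>I. f i x) \<noteq> 0) = locus n (\<lambda>x. \<forall>i\<in>I. f i x \<noteq> 0)"
    using assms(1) by (intro locus_cong) simp
  finally show ?thesis .
qed

lemmas locclosed_locus_intros = locclosed_locus_conj locclosed_locus_eq locclosed_locus_neq

subsection \<open>Classes in the Grothendieck group\<close>

lemma K0_refl: "K0_eq a a"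
  unfolding K0_eq_def using rels.rel_zero by simp

lemma K0_sym: "K0_eq a b \<Longrightarrow> K0_eq b a"
  unfolding K0_eq_def by (drule rels.rel_neg) simp

lemma K0_trans: "K0_eq a b \<Longrightarrow> K0_eq b c \<Longrightarrow> K0_eq a c"
  unfolding K0_eq_def by (drule (1) rels.rel_add) simp

lemma K0_add: "K0_eq a b \<Longrightarrow> K0_eq c d \<Longrightarrow> K0_eq (\<lambda>v. a v + c v) (\<lambda>v. b v + d v)"
  unfolding K0_eq_def by (drule (1) rels.rel_add) (simp add: algebra_simps)

lemma K0_neg: "K0_eq a b \<Longrightarrow> K0_eq (\<lambda>v. - a v) (\<lambda>v. - b v)"
  unfolding K0_eq_def by (drule rels.rel_neg) (simp add: algebra_simps)

lemma K0_diff: "K0_eq a b \<Longrightarrow> K0_eq c d \<Longrightarrow> K0_eq (\<lambda>v. a v - c v) (\<lambda>v. b v - d v)"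
  using K0_add[OF _ K0_neg] by simp

(* Lclass p is p(L) for the class L = [A^1], as a formal combination of the generators [A^n]. *)

definition L :: "int poly" where
  "L = [:0, 1:]"

definition Lclass :: "int poly \<Rightarrow> fgrp" where
  "Lclass p = (\<lambda>(n, X). if X = aff n then coeff p n else 0)"

lemma Lclass_add: "Lclass (p + q) = (\<lambda>v. Lclass p v + Lclass q v)"
  by (auto simp: Lclass_def)

lemma Lclass_diff: "Lclass (p - q) = (\<lambda>v. Lclass p v - Lclass q v)"
  by (auto simp: Lclass_def)

lemma Lclass_0: "Lclass 0 = (\<lambda>v. 0)"
  by (auto simp: Lclass_def)

lemma monom_eq_L_power: "monom c n = of_int c * L ^ n"
  by (simp add: L_def monom_altdef of_int_poly)

lemma Lclass_monom: "Lclass (monom c n) = (\<lambda>v. c * gen n (aff n) v)"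
  by (auto simp: Lclass_def gen_def)

lemma Lclass_L_power: "Lclass (L ^ n) = gen n (aff n)"
  using Lclass_monom[of 1 n] by (simp add: monom_eq_L_power)

lemma Lpoly_eq_Lclass: "Lpoly cs = Lclass (\<Sum>(k, c)\<leftarrow>cs. of_int c * L ^ k)"
proof (induction cs)
  case Nil
  then show ?case by (simp add: Lpoly_def Lclass_0)
next
  case (Cons kc cs)
  obtain k c where kc: "kc = (k, c)" by fastforce
  have "Lclass (of_int c * L ^ k) = (\<lambda>v. c * Lpow k v)"
    using Lclass_monom[of c k] by (simp add: monom_eq_L_power Lpow_def)
  moreover have "Lpoly (kc # cs) = (\<lambda>v. c * Lpow k v + Lpoly cs v)"
    by (simp add: Lpoly_def kc)
  ultimately show ?case by (simp add: Cons.IH kc Lclass_add)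
qed

definition has_class :: "nat \<Rightarrow> (pt \<Rightarrow> bool) \<Rightarrow> fgrp \<Rightarrow> bool" where
  "has_class n P a \<longleftrightarrow> K0_eq (gen n (locus n P)) a"

lemma has_class_refl: "has_class n P (gen n (locus n P))"
  unfolding has_class_def by (rule K0_refl)

lemma has_class_trans: "has_class n Q (gen m (locus m P)) \<Longrightarrow> has_class m P a \<Longrightarrow> has_class n Q a"
  unfolding has_class_def by (rule K0_trans)

lemma has_class_cong:
  assumes "has_class n Q a" "\<And>x. x \<in> aff n \<Longrightarrow> P x \<longleftrightarrow> Q x"
  shows "has_class n P a"
  using assms(1) locus_cong[OF assms(2)] by (simp add: has_class_def)

lemma has_class_aff: "has_class n (\<lambda>x. True) (Lclass (L ^ n))"
proof -
  have "locus n (\<lambda>x. True) = aff n" by (simp add: locus_def)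
  then show ?thesis unfolding has_class_def Lclass_L_power by (simp add: K0_refl)
qed

lemma has_class_empty: "has_class n (\<lambda>x. False) (Lclass 0)"
proof -
  have "locclosed n {}"
    unfolding locclosed_def using zclosed_aff by blast
  \<comment> \<open>the scissor relation for the empty variety says [{}] - [{}] - [{}] = 0\<close>
  from rels.rel_neg[OF rels.rel_cut[OF this zclosed_aff]]
  show ?thesis unfolding has_class_def K0_eq_def locus_def Lclass_0 by simp
qed

lemma K0_eq_cut_locus:
  assumes "locclosed n (locus n P)" "f \<in> polyfun n"
  shows "K0_eq (gen n (locus n P))
    (\<lambda>v. gen n (locus n (\<lambda>x. P x \<and> f x = 0)) v + gen n (locus n (\<lambda>x. P x \<and> f x \<noteq> 0)) v)"
proof -
  let ?C = "{x \<in> aff n. f x = 0}"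
  have "locus n P \<inter> ?C = locus n (\<lambda>x. P x \<and> f x = 0)"
    and "locus n P - ?C = locus n (\<lambda>x. P x \<and> f x \<noteq> 0)"
    by (auto simp: locus_def)
  with rels.rel_cut[OF assms(1) zclosed_zero_set[OF assms(2)]]
  show ?thesis unfolding K0_eq_def by (simp add: algebra_simps)
qed

lemma has_class_cut:
  assumes "locclosed n (locus n P)" "f \<in> polyfun n"
    and "has_class n (\<lambda>x. P x \<and> f x = 0) a" "has_class n (\<lambda>x. P x \<and> f x \<noteq> 0) b"
  shows "has_class n P (\<lambda>v. a v + b v)"
  using K0_trans[OF K0_eq_cut_locus[OF assms(1,2)] K0_add[OF assms(3,4)[unfolded has_class_def]]]
  unfolding has_class_def .

lemma has_class_split:
  assumes "has_class n P0 (Lclass p)" "has_class n P1 (Lclass q)"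
    and "locclosed n (locus n P)" "f \<in> polyfun n"
    and "\<And>x. x \<in> aff n \<Longrightarrow> P0 x \<longleftrightarrow> P x \<and> f x = 0"
    and "\<And>x. x \<in> aff n \<Longrightarrow> P1 x \<longleftrightarrow> P x \<and> f x \<noteq> 0"
  shows "has_class n P (Lclass (p + q))"
proof -
  have "has_class n (\<lambda>x. P x \<and> f x = 0) (Lclass p)"
    by (rule has_class_cong[OF assms(1)]) (simp add: assms(5))
  moreover have "has_class n (\<lambda>x. P x \<and> f x \<noteq> 0) (Lclass q)"
    by (rule has_class_cong[OF assms(2)]) (simp add: assms(6))
  ultimately show ?thesis
    unfolding Lclass_add by (rule has_class_cut[OF assms(3,4)])
qed

lemma has_class_split_diff:
  assumes "locclosed n (locus n P)" "f \<in> polyfun n"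
    and "has_class n P (Lclass p)" "has_class n (\<lambda>x. P x \<and> f x = 0) (Lclass q)"
  shows "has_class n (\<lambda>x. P x \<and> f x \<noteq> 0) (Lclass (p - q))"
proof -
  let ?Z = "gen n (locus n (\<lambda>x. P x \<and> f x = 0))"
  have "K0_eq (\<lambda>v. gen n (locus n P) v - ?Z v) (Lclass (p - q))"
    using K0_diff[OF assms(3,4)[unfolded has_class_def]] unfolding Lclass_diff .
  moreover have "K0_eq (\<lambda>v. gen n (locus n P) v - ?Z v) (gen n (locus n (\<lambda>x. P x \<and> f x \<noteq> 0)))"
    using K0_diff[OF K0_eq_cut_locus[OF assms(1,2)] K0_refl[of ?Z]] by simp
  ultimately show ?thesis unfolding has_class_def using K0_sym K0_trans by blast
qed

subsection \<open>Graphs of rational functions\<close>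

lemma morphism_polyfun:
  assumes "\<And>x. x \<in> X \<Longrightarrow> f x \<in> Y" "\<And>j. j < m \<Longrightarrow> (\<lambda>x. f x j) \<in> polyfun n"
  shows "morphism n X m Y f"
  unfolding morphism_def
proof (intro conjI ballI allI impI)
  fix p j assume "p \<in> X" "j < m"
  then show "\<exists>g h D. g \<in> polyfun n \<and> h \<in> polyfun n \<and> zclosed n D \<and> p \<notin> D \<and>
      (\<forall>x\<in>X - D. h x \<noteq> 0 \<and> f x j = g x / h x)"
    using assms(2) pf_const[of 1] zclosed_empty
    by (intro exI[of _ "\<lambda>x. f x j"] exI[of _ "\<lambda>x. 1"] exI[of _ "{}"]) simp
qed (rule assms(1))

lemma morphism_ins_coord_quotient:
  assumes kn: "k \<le> n" and c: "c \<in> polyfun n" and d: "d \<in> polyfun n"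
    and c_nonzero: "\<And>y. y \<in> X \<Longrightarrow> c y \<noteq> 0"
    and maps_to: "\<And>y. y \<in> X \<Longrightarrow> ins_coord k (- d y / c y) y \<in> Y"
  shows "morphism n X (Suc n) Y (\<lambda>y. ins_coord k (- d y / c y) y)"
  unfolding morphism_def
proof (intro conjI ballI allI impI)
  fix p j assume p: "p \<in> X" and j: "j < Suc n"
  show "\<exists>g h D. g \<in> polyfun n \<and> h \<in> polyfun n \<and> zclosed n D \<and> p \<notin> D \<and>
      (\<forall>y\<in>X - D. h y \<noteq> 0 \<and> ins_coord k (- d y / c y) y j = g y / h y)"
  proof (cases "j = k")
    case True
    with p c_nonzero show ?thesis
      by (intro exI[of _ "\<lambda>y. - d y"] exI[of _ c] exI[of _ "{y \<in> aff n. c y = 0}"])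
        (simp add: polyfun_neg d c zclosed_zero_set)
  next
    case False
    then have "(\<lambda>y. ins_coord k (- d y / c y) y j) \<in> polyfun n"
      using j kn by (cases "j < k") (simp_all add: ins_coord_def pf_coord)
    then show ?thesis
      using pf_const[of 1] zclosed_empty
      by (intro exI[of _ "\<lambda>y. ins_coord k (- d y / c y) y j"] exI[of _ "\<lambda>y. 1"] exI[of _ "{}"])
        simp
  qed
qed (rule maps_to)

lemma isomorphic_graph:
  assumes kn: "k \<le> n" and c: "c \<in> polyfun n" and d: "d \<in> polyfun n"
    and c_nonzero: "\<And>y. y \<in> aff n \<Longrightarrow> P y \<Longrightarrow> c y \<noteq> 0"
    and Q: "\<And>x. x \<in> aff (Suc n) \<Longrightarrow>
      Q x \<longleftrightarrow> P (del_coord k x) \<and> c (del_coord k x) * x k + d (del_coord k x) = 0"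
  shows "isomorphic (Suc n) (locus (Suc n) Q) n (locus n P)"
proof -
  define g where "g y = ins_coord k (- d y / c y) y" for y
  have "morphism (Suc n) (locus (Suc n) Q) n (locus n P) (del_coord k)"
  proof (rule morphism_polyfun)
    fix j assume "j < n"
    then show "(\<lambda>x. del_coord k x j) \<in> polyfun (Suc n)"
      by (cases "j < k") (simp_all add: del_coord_def pf_coord)
  next
    fix x assume "x \<in> locus (Suc n) Q"
    with Q del_coord_in_aff[OF kn] show "del_coord k x \<in> locus n P" by (auto simp: locus_def)
  qed
  moreover have "morphism n (locus n P) (Suc n) (locus (Suc n) Q) g"
    unfolding g_def
  proof (rule morphism_ins_coord_quotient[OF kn c d])
    fix y assume "y \<in> locus n P"
    then have y: "y \<in> aff n" "P y" by (auto simp: locus_def)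
    with c_nonzero show "c y \<noteq> 0" by simp
    with y have "c y * (- d y / c y) + d y = 0" by simp
    with y ins_coord_in_aff[OF kn] show "ins_coord k (- d y / c y) y \<in> locus (Suc n) Q"
      by (simp add: locus_def Q)
  qed
  moreover have "g (del_coord k x) = x" if "x \<in> locus (Suc n) Q" for x
  proof -
    from that Q have x: "x \<in> aff (Suc n)" "P (del_coord k x)"
      "c (del_coord k x) * x k + d (del_coord k x) = 0" by (auto simp: locus_def)
    with c_nonzero del_coord_in_aff[OF kn] have "x k = - d (del_coord k x) / c (del_coord k x)"
      by (auto simp: field_simps add_eq_0_iff)
    then show ?thesis by (simp add: g_def ins_del_coord fun_upd_idem_iff)
  qed
  moreover have "del_coord k (g y) = y" for y by (simp add: g_def)
  ultimately show ?thesis unfolding isomorphic_def by blast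
qed

lemma has_class_graph:
  assumes N: "N = Suc n" and kn: "k \<le> n" and c: "c \<in> polyfun n" and d: "d \<in> polyfun n"
    and P: "locclosed n (locus n P)"
    and c_nonzero: "\<And>y. y \<in> aff n \<Longrightarrow> P y \<Longrightarrow> c y \<noteq> 0"
    and Q: "\<And>x. x \<in> aff N \<Longrightarrow>
      Q x \<longleftrightarrow> P (del_coord k x) \<and> c (del_coord k x) * x k + d (del_coord k x) = 0"
  shows "has_class N Q (gen n (locus n P))"
proof -
  have "(\<lambda>x. c (del_coord k x) * x k + d (del_coord k x)) \<in> polyfun (Suc n)"
    using kn by (intro pf_add pf_mult polyfun_del_coord c d pf_coord) simp
  then have "locclosed (Suc n) (locus (Suc n)
      (\<lambda>x. P (del_coord k x) \<and> c (del_coord k x) * x k + d (del_coord k x) = 0))"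
    by (intro locclosed_locus_conj locclosed_locus_del_coord kn P locclosed_locus_zero)
  also have "locus (Suc n) (\<lambda>x. P (del_coord k x) \<and> c (del_coord k x) * x k + d (del_coord k x) = 0)
      = locus (Suc n) Q"
    using Q N by (intro locus_cong) simp
  finally have "locclosed (Suc n) (locus (Suc n) Q)" .
  from rels.rel_iso[OF this P isomorphic_graph[OF kn c d c_nonzero]] Q N
  show ?thesis unfolding has_class_def K0_eq_def by simp
qed

subsection \<open>Stratifications\<close>

lemma del_coord_shift: "i \<noteq> j \<Longrightarrow> del_coord j x (if i < j then i else i - 1) = x i"
  by (auto simp: del_coord_def)

lemma has_class_coords_zero:
  "Z \<subseteq> {..<n} \<Longrightarrow> has_class n (\<lambda>x. \<forall>i\<in>Z. x i = 0) (Lclass (L ^ (n - card Z)))"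
proof (induction "card Z" arbitrary: Z n)
  case 0
  then have "Z = {}" using finite_subset by fastforce
  then show ?case using has_class_aff by simp
next
  case (Suc m)
  then obtain j where j: "j \<in> Z" by fastforce
  define Z' where "Z' = Z - {j}"
  define h where "h i = (if i < j then i else i - 1)" for i
  obtain n' where n: "n = Suc n'"
    using Suc.prems j by (metis lessThan_iff not0_implies_Suc not_less0 subsetD)
  have jn: "j \<le> n'" using Suc.prems j n by auto
  have "finite Z" using Suc.prems finite_subset by blast
  then have card_Z': "card Z' = m" using Suc.hyps(2) j by (simp add: Z'_def)
  have "inj_on h Z'" by (auto simp: inj_on_def h_def Z'_def split: if_splits)
  then have card: "card (h ` Z') = m" by (simp add: card_image card_Z')
  have sub: "h ` Z' \<subseteq> {..<n'}" using Suc.prems n jn by (auto simp: h_def Z'_def)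
  have IH: "has_class n' (\<lambda>y. \<forall>i\<in>h ` Z'. y i = 0) (Lclass (L ^ (n' - m)))"
    using Suc.hyps(1)[OF card[symmetric] sub] card by simp
  have "has_class n (\<lambda>x. \<forall>i\<in>Z. x i = 0) (gen n' (locus n' (\<lambda>y. \<forall>i\<in>h ` Z'. y i = 0)))"
  proof (rule has_class_graph[OF n jn pf_const[of 1] pf_const[of 0]])
    show "locclosed n' (locus n' (\<lambda>y. \<forall>i\<in>h ` Z'. y i = 0))"
      using sub finite_subset by (intro locclosed_locus_all_zero pf_coord) auto
    fix x
    have "del_coord j x (h i) = x i" if "i \<in> Z'" for i
      using that by (simp add: h_def Z'_def del_coord_shift)
    then show "(\<forall>i\<in>Z. x i = 0) \<longleftrightarrow> (\<forall>i\<in>h ` Z'. del_coord j x i = 0) \<and> 1 * x j + 0 = 0"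
      using j by (auto simp: Z'_def)
  qed simp
  from has_class_trans[OF this IH] show ?case
    using n Suc.hyps(2)[symmetric] by simp
qed

lemma card_disjoint_Un_le: "Z \<union> N \<subseteq> {..<n} \<Longrightarrow> Z \<inter> N = {} \<Longrightarrow> card Z + card N \<le> n"
  by (metis card_Un_disjoint card_lessThan card_mono finite_Un finite_lessThan finite_subset)

lemma has_class_coord_stratum:
  assumes "Z \<union> N \<subseteq> {..<n}" "Z \<inter> N = {}"
  shows "has_class n (\<lambda>x. (\<forall>i\<in>Z. x i = 0) \<and> (\<forall>i\<in>N. x i \<noteq> 0))
    (Lclass ((L - 1) ^ card N * L ^ (n - card Z - card N)))"
proof -
  have "finite N" using assms(1) finite_subset by blast
  then show ?thesis
    using assms
  proof (induction N arbitrary: Z rule: finite_induct)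
    case empty
    then show ?case using has_class_coords_zero[of Z n] by simp
  next
    case (insert j N)
    let ?P = "\<lambda>x. (\<forall>i\<in>Z. x i = 0) \<and> (\<forall>i\<in>N. x i \<noteq> 0)"
    have "finite Z" using insert.prems finite_subset by blast
    have "j \<notin> Z" "j < n" using insert.prems by auto
    have card_le: "card Z + Suc (card N) \<le> n"
      using card_disjoint_Un_le[OF insert.prems] insert.hyps by simp
    define e where "e = n - card Z - Suc (card N)"
    have e: "n - card Z - card N = Suc e" using card_le by (simp add: e_def)
    have "has_class n ?P (Lclass ((L - 1) ^ card N * L ^ (n - card Z - card N)))"
      using insert.IH[of Z] insert.prems by auto
    then have all: "has_class n ?P (Lclass ((L - 1) ^ card N * L ^ Suc e))"
      by (simp only: e)
    have zero: "has_class n (\<lambda>x. ?P x \<and> x j = 0) (Lclass ((L - 1) ^ card N * L ^ e))"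
    proof (rule has_class_cong)
      show "has_class n (\<lambda>x. (\<forall>i\<in>insert j Z. x i = 0) \<and> (\<forall>i\<in>N. x i \<noteq> 0))
          (Lclass ((L - 1) ^ card N * L ^ e))"
        using insert.IH[of "insert j Z"] insert.prems insert.hyps \<open>finite Z\<close> \<open>j \<notin> Z\<close>
        by (simp add: e_def)
    qed auto
    have "has_class n (\<lambda>x. ?P x \<and> x j \<noteq> 0)
        (Lclass ((L - 1) ^ card N * L ^ Suc e - (L - 1) ^ card N * L ^ e))"
      using insert.prems insert.hyps(1) \<open>finite Z\<close> \<open>j < n\<close>
      by (intro has_class_split_diff[OF _ _ all zero] locclosed_locus_conj
          locclosed_locus_all_zero locclosed_locus_all_nonzero pf_coord) auto
    moreover have "(L - 1) ^ card N * L ^ Suc e - (L - 1) ^ card N * L ^ e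
        = (L - 1) ^ card (insert j N) * L ^ (n - card Z - card (insert j N))"
      using insert.hyps by (simp add: e_def algebra_simps)
    ultimately have "has_class n (\<lambda>x. ?P x \<and> x j \<noteq> 0)
        (Lclass ((L - 1) ^ card (insert j N) * L ^ (n - card Z - card (insert j N))))"
      by simp
    then show ?case by (rule has_class_cong) auto
  qed
qed

lemma has_class_coord_stratum_cong:
  assumes "Z \<union> N \<subseteq> {..<n}" "Z \<inter> N = {}"
    and "\<And>x. x \<in> aff n \<Longrightarrow> P x \<longleftrightarrow> (\<forall>i\<in>Z. x i = 0) \<and> (\<forall>i\<in>N. x i \<noteq> 0)"
    and "p = (L - 1) ^ card N * L ^ (n - card Z - card N)"
  shows "has_class n P (Lclass p)"
  using has_class_cong[OF has_class_coord_stratum[OF assms(1,2)] assms(3)] assms(4) by simp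

lemma has_class_first_nonzero_strata:
  fixes N :: nat
  assumes Q: "locclosed n (locus n Q)" and f: "\<And>t. t < N \<Longrightarrow> f t \<in> polyfun n"
    and zero: "has_class n (\<lambda>x. Q x \<and> (\<forall>t<N. f t x = 0)) a"
    and strata: "\<And>r. r < N \<Longrightarrow> has_class n (\<lambda>x. Q x \<and> (\<forall>t<r. f t x = 0) \<and> f r x \<noteq> 0) (b r)"
  shows "has_class n Q (\<lambda>v. a v + (\<Sum>r<N. b r v))"
proof -
  have "has_class n (\<lambda>x. Q x \<and> (\<forall>t<s. f t x = 0)) (\<lambda>v. a v + (\<Sum>r\<in>{s..<N}. b r v))"
    if "s \<le> N" for s
    using that
  proof (induction s rule: inc_induct)
    case base
    then show ?case using zero by simp
  next
    case (step s)
    have "locclosed n (locus n (\<lambda>x. \<forall>t\<in>{..<s}. f t x = 0))"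
      using step.hyps by (intro locclosed_locus_all_zero f) auto
    from locclosed_locus_conj[OF Q this]
    have prefix: "locclosed n (locus n (\<lambda>x. Q x \<and> (\<forall>t<s. f t x = 0)))"
      by (simp add: lessThan_iff Ball_def)
    have "has_class n (\<lambda>x. (Q x \<and> (\<forall>t<s. f t x = 0)) \<and> f s x = 0)
        (\<lambda>v. a v + (\<Sum>r\<in>{Suc s..<N}. b r v))"
      by (rule has_class_cong[OF step.IH]) (auto simp: less_Suc_eq)
    moreover have "has_class n (\<lambda>x. (Q x \<and> (\<forall>t<s. f t x = 0)) \<and> f s x \<noteq> 0) (b s)"
      by (rule has_class_cong[OF strata[OF step.hyps(2)]]) auto
    ultimately have "has_class n (\<lambda>x. Q x \<and> (\<forall>t<s. f t x = 0))
        (\<lambda>v. (a v + (\<Sum>r\<in>{Suc s..<N}. b r v)) + b s v)"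
      by (rule has_class_cut[OF prefix f[OF step.hyps(2)]])
    then show ?case
      using step.hyps by (simp add: sum.atLeast_Suc_lessThan algebra_simps)
  qed
  from this[of 0] show ?thesis by (simp add: atLeast0LessThan)
qed

subsection \<open>The trace of the superpotential\<close>

definition anticomm :: "pt \<Rightarrow> nat \<Rightarrow> nat \<Rightarrow> complex" where
  "anticomm x i j = mmul (mat_of 0 x) (mat_of 1 x) i j + mmul (mat_of 1 x) (mat_of 0 x) i j"

(* The coefficient of coordinate 8 + r, which holds entry (r div 2, r mod 2) of A3;
   tr (S A3) pairs that entry with entry (r mod 2, r div 2) of S. *)

definition trW_coeff :: "nat \<Rightarrow> pt \<Rightarrow> complex" where
  "trW_coeff r x = anticomm x (r mod 2) (r div 2)"

lemma sum_lessThan_4: "(\<Sum>r<(4::nat). f r) = f 0 + f 1 + f 2 + (f 3 :: 'a :: comm_monoid_add)"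
  by (simp add: eval_nat_numeral ac_simps)

lemma mmul_explicit: "mmul A B i j = A i 0 * B 0 j + A i 1 * B 1 j"
  by (simp add: mmul_def numeral_2_eq_2)

lemma mtr_explicit: "mtr A = A 0 0 + A 1 1"
  by (simp add: mtr_def numeral_2_eq_2)

lemma trW_coeff_explicit:
  "trW_coeff 0 x = 2 * x 0 * x 4 + x 1 * x 6 + x 2 * x 5"
  "trW_coeff 1 x = x 0 * x 6 + x 2 * x 4 + x 2 * x 7 + x 3 * x 6"
  "trW_coeff 2 x = x 0 * x 5 + x 1 * x 4 + x 1 * x 7 + x 3 * x 5"
  "trW_coeff 3 x = x 1 * x 6 + x 2 * x 5 + 2 * x 3 * x 7"
  by (simp_all add: trW_coeff_def)
    (simp_all add: anticomm_def mmul_explicit mat_of_def algebra_simps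
      flip: numeral_2_eq_2 numeral_3_eq_3)

lemma trW_linear: "trW x = (\<Sum>r<4. trW_coeff r x * x (8 + r))"
  unfolding sum_lessThan_4 trW_coeff_explicit
  by (simp add: trW_def mtr_explicit mmul_explicit mat_of_def algebra_simps
      flip: numeral_2_eq_2 numeral_3_eq_3)

lemma polyfun_trW_coeff:
  assumes "r < 4" "8 \<le> n"
  shows "trW_coeff r \<in> polyfun n"
proof -
  have "r mod 2 < 2" "r div 2 < 2" using assms(1) by auto
  then have "(\<lambda>x. trW_coeff r x) \<in> polyfun n"
    unfolding trW_coeff_def anticomm_def mmul_def mat_of_def using assms(2)
    by (intro pf_add polyfun_sum pf_mult pf_coord) auto
  then show ?thesis by simp
qed

lemma trW_coeff_low_coords:
  assumes "r < 4" "\<forall>i<8. x i = y i"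
  shows "trW_coeff r x = trW_coeff r y"
  using polyfun_eq_if_coords_eq[OF polyfun_trW_coeff[OF assms(1) order_refl] assms(2)] .

lemma polyfun_trW: "12 \<le> n \<Longrightarrow> trW \<in> polyfun n"
proof -
  assume "12 \<le> n"
  then have "(\<lambda>x. \<Sum>r<4. trW_coeff r x * x (8 + r)) \<in> polyfun n"
    by (intro polyfun_sum pf_mult polyfun_trW_coeff pf_coord) auto
  then show ?thesis by (simp add: trW_linear[abs_def])
qed

lemma trW_affine:
  assumes "r < 4"
  shows "trW x = trW (x(8 + r := 0)) + trW_coeff r x * x (8 + r)"
proof -
  have "trW (x(8 + r := 0)) = (\<Sum>s<4. trW_coeff s x * (x(8 + r := 0)) (8 + s))"
    unfolding trW_linear using trW_coeff_low_coords by (intro sum.cong) auto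
  also have "\<dots> = (\<Sum>s<4. trW_coeff s x * x (8 + s)
      - (if s = r then trW_coeff s x * x (8 + s) else 0))"
    by (intro sum.cong) auto
  also have "\<dots> = trW x - trW_coeff r x * x (8 + r)"
    using assms by (simp add: sum_subtractf trW_linear)
  finally show ?thesis by simp
qed

definition anticommuting :: "pt \<Rightarrow> bool" where
  "anticommuting x \<longleftrightarrow> (\<forall>r<4. trW_coeff r x = 0)"

lemma trW_anticommuting: "anticommuting x \<Longrightarrow> trW x = 0"
  by (simp add: anticommuting_def trW_linear)

lemma has_class_trW_level_stratum:
  assumes r: "r < 4" and P: "locclosed 11 (locus 11 P)"
    and P_low: "\<And>x y. \<forall>i<8. x i = y i \<Longrightarrow> P x = P y"
    and nonzero: "\<And>x. P x \<Longrightarrow> trW_coeff r x \<noteq> 0"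
  shows "has_class 12 (\<lambda>x. trW x = lam \<and> P x) (gen 11 (locus 11 P))"
proof -
  let ?k = "8 + r" and ?d = "\<lambda>y. trW (ins_coord (8 + r) 0 y) - lam"
  have c: "trW_coeff r \<in> polyfun 11" by (rule polyfun_trW_coeff[OF r]) simp
  have d: "?d \<in> polyfun 11"
    using r by (intro polyfun_diff pf_const polyfun_ins_coord[OF polyfun_trW]) simp_all
  have eq: "trW x = lam \<and> P x \<longleftrightarrow>
      P (del_coord ?k x) \<and> trW_coeff r (del_coord ?k x) * x ?k + ?d (del_coord ?k x) = 0" for x
  proof -
    have low: "\<forall>i<8. del_coord ?k x i = x i" by (simp add: del_coord_low)
    have "trW x - lam = trW_coeff r x * x ?k + ?d (del_coord ?k x)"
      using trW_affine[OF r, of x] by (simp add: ins_del_coord)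
    then have "trW x = lam \<longleftrightarrow> trW_coeff r x * x ?k + ?d (del_coord ?k x) = 0"
      by (metis eq_iff_diff_eq_0)
    then show ?thesis using P_low[OF low] trW_coeff_low_coords[OF r low] by auto
  qed
  show ?thesis
    by (rule has_class_graph[OF _ _ c d P _ eq]) (use r nonzero in auto)
qed

definition trW_stratum :: "nat \<Rightarrow> pt \<Rightarrow> bool" where
  "trW_stratum r x \<longleftrightarrow> (\<forall>t<r. trW_coeff t x = 0) \<and> trW_coeff r x \<noteq> 0"

lemma has_class_split_anticommuting:
  assumes "8 \<le> n" "locclosed n (locus n Q)"
    and "has_class n (\<lambda>x. Q x \<and> anticommuting x) a"
    and "\<And>r. r < 4 \<Longrightarrow> has_class n (\<lambda>x. Q x \<and> trW_stratum r x) (b r)"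
  shows "has_class n Q (\<lambda>v. a v + (\<Sum>r<4. b r v))"
proof (rule has_class_first_nonzero_strata[where f = trW_coeff, OF assms(2)])
  show "has_class n (\<lambda>x. Q x \<and> (\<forall>t<4. trW_coeff t x = 0)) a"
    using assms(3) unfolding anticommuting_def .
  show "has_class n (\<lambda>x. Q x \<and> (\<forall>t<r. trW_coeff t x = 0) \<and> trW_coeff r x \<noteq> 0) (b r)"
    if "r < 4" for r
    using assms(4)[OF that] unfolding trW_stratum_def .
qed (rule polyfun_trW_coeff[OF _ assms(1)])

lemma locclosed_locus_trW_stratum: "r < 4 \<Longrightarrow> 8 \<le> n \<Longrightarrow> locclosed n (locus n (trW_stratum r))"
proof -
  assume "r < 4" "8 \<le> n"
  then have "locclosed n (locus n (\<lambda>x. (\<forall>t\<in>{..<r}. trW_coeff t x = 0) \<and> trW_coeff r x \<noteq> 0))"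
    by (intro locclosed_locus_conj locclosed_locus_all_zero locclosed_locus_nonzero
        polyfun_trW_coeff) auto
  then show ?thesis by (simp add: trW_stratum_def[abs_def] lessThan_iff Ball_def)
qed

lemma trW_stratum_low_coords:
  assumes "r < 4" "\<forall>i<8. x i = y i"
  shows "trW_stratum r x = trW_stratum r y"
proof -
  have "trW_coeff t x = trW_coeff t y" if "t \<le> r" for t
    using trW_coeff_low_coords assms that by simp
  then show ?thesis by (auto simp: trW_stratum_def)
qed

lemma has_class_trW_level:
  assumes "has_class 12 (\<lambda>x. trW x = lam \<and> anticommuting x) R"
  shows "has_class 12 (\<lambda>x. trW x = lam) (\<lambda>v. R v + (\<Sum>r<4. gen 11 (locus 11 (trW_stratum r)) v))"
proof (rule has_class_split_anticommuting[OF _ _ assms])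
  show "locclosed 12 (locus 12 (\<lambda>x. trW x = lam))"
    by (intro locclosed_locus_eq polyfun_trW pf_const) simp
  fix r :: nat assume r: "r < 4"
  show "has_class 12 (\<lambda>x. trW x = lam \<and> trW_stratum r x) (gen 11 (locus 11 (trW_stratum r)))"
  proof (rule has_class_trW_level_stratum[OF r])
    show "locclosed 11 (locus 11 (trW_stratum r))"
      using locclosed_locus_trW_stratum[OF r] by simp
    show "trW_stratum r x = trW_stratum r y" if "\<forall>i<8. x i = y i" for x y
      using trW_stratum_low_coords[OF r that] .
  qed (simp add: trW_stratum_def)
qed simp

lemma has_class_aff_11_split:
  assumes "has_class 11 anticommuting A"
  shows "has_class 11 (\<lambda>x. True) (\<lambda>v. A v + (\<Sum>r<4. gen 11 (locus 11 (trW_stratum r)) v))"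
proof (rule has_class_split_anticommuting)
  show "locclosed 11 (locus 11 (\<lambda>x. True))"
    using locclosed_locus_zero[OF pf_const[of 0]] by simp
  show "has_class 11 (\<lambda>x. True \<and> anticommuting x) A" using assms by simp
  show "has_class 11 (\<lambda>x. True \<and> trW_stratum r x) (gen 11 (locus 11 (trW_stratum r)))" for r :: nat
    using has_class_refl by simp
qed simp

lemma K0_eq_MW:
  assumes "has_class 11 anticommuting A" "has_class 12 (\<lambda>x. trW x = lam \<and> anticommuting x) R"
  shows "K0_eq (gen 12 (MW lam)) (\<lambda>v. Lclass (L ^ 11) v - A v + R v)"
proof -
  let ?S = "\<lambda>v. \<Sum>r<4. gen 11 (locus 11 (trW_stratum r)) v"
  have MW: "K0_eq (gen 12 (MW lam)) (\<lambda>v. R v + ?S v)"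
    using has_class_trW_level[OF assms(2)] by (simp add: has_class_def MW_def locus_def)
  have "K0_eq (Lclass (L ^ 11)) (\<lambda>v. A v + ?S v)"
    using has_class_aff[of 11] has_class_aff_11_split[OF assms(1)] unfolding has_class_def
    by (blast intro: K0_trans K0_sym)
  from K0_add[OF K0_refl[of R] K0_diff[OF K0_sym[OF this] K0_refl[of A]]]
  have "K0_eq (\<lambda>v. R v + ?S v) (\<lambda>v. Lclass (L ^ 11) v - A v + R v)"
    by (simp add: algebra_simps)
  with MW show ?thesis by (rule K0_trans)
qed

subsection \<open>Anticommuting pairs in trace coordinates\<close>

(* Anticommutation in the coordinates y0 = tr A1, y3 = (A1)00 - (A1)11, y4 = tr A2,
   y7 = (A2)00 - (A2)11, the other coordinates being unchanged. *)

definition anticommuting_tc :: "pt \<Rightarrow> bool" where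
  "anticommuting_tc y \<longleftrightarrow> y 0 * y 7 + y 4 * y 3 = 0 \<and> y 0 * y 5 + y 4 * y 1 = 0
     \<and> y 0 * y 6 + y 4 * y 2 = 0 \<and> y 0 * y 4 + y 3 * y 7 + 2 * y 1 * y 6 + 2 * y 2 * y 5 = 0"

definition trace_coords :: "pt \<Rightarrow> pt" where
  "trace_coords x = x(0 := x 0 + x 3, 3 := x 0 - x 3, 4 := x 4 + x 7, 7 := x 4 - x 7)"

definition trace_coords_inv :: "pt \<Rightarrow> pt" where
  "trace_coords_inv y =
     y(0 := (y 0 + y 3) / 2, 3 := (y 0 - y 3) / 2, 4 := (y 4 + y 7) / 2, 7 := (y 4 - y 7) / 2)"

lemma trace_coords_inv_trace_coords [simp]: "trace_coords_inv (trace_coords x) = x"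
  by (rule ext) (simp add: trace_coords_def trace_coords_inv_def field_simps)

lemma trace_coords_trace_coords_inv [simp]: "trace_coords (trace_coords_inv y) = y"
  by (rule ext) (simp add: trace_coords_def trace_coords_inv_def field_simps)

lemma anticommuting_tc_trace_coords: "anticommuting_tc (trace_coords x) \<longleftrightarrow> anticommuting x"
proof -
  let ?y = "trace_coords x"
  have "?y 0 * ?y 7 + ?y 4 * ?y 3 = trW_coeff 0 x - trW_coeff 3 x"
    and "?y 0 * ?y 5 + ?y 4 * ?y 1 = trW_coeff 2 x"
    and "?y 0 * ?y 6 + ?y 4 * ?y 2 = trW_coeff 1 x"
    and "?y 0 * ?y 4 + ?y 3 * ?y 7 + 2 * ?y 1 * ?y 6 + 2 * ?y 2 * ?y 5
      = trW_coeff 0 x + trW_coeff 3 x"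
    by (simp_all only: trW_coeff_explicit) (simp_all add: trace_coords_def algebra_simps)
  moreover have "trW_coeff 0 x - trW_coeff 3 x = 0 \<and> trW_coeff 0 x + trW_coeff 3 x = 0
      \<longleftrightarrow> trW_coeff 0 x = 0 \<and> trW_coeff 3 x = 0"
    by (auto simp: algebra_simps)
  ultimately show ?thesis
    unfolding anticommuting_tc_def anticommuting_def
    by (auto simp: less_Suc_eq numeral_eq_Suc)
qed

lemma polyfun_trace_coords:
  assumes "8 \<le> n" "j < n"
  shows "(\<lambda>x. trace_coords x j) \<in> polyfun n" "(\<lambda>y. trace_coords_inv y j) \<in> polyfun n"
  using assms
  by (cases "j = 0"; cases "j = 3"; cases "j = 4"; cases "j = 7";
      auto simp: trace_coords_def trace_coords_inv_def intro!: polyfun_intros polyfun_divide_const)+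

lemma has_class_quadric_cone_4:
  "has_class (m + 8) (\<lambda>y. y 0 = 0 \<and> y 4 = 0 \<and> y 3 = 0 \<and> 2 * y 1 * y 6 + 2 * y 2 * y 5 = 0)
     (Lclass (L ^ (m + 3) + (L - 1) * L ^ (m + 2) + (L - 1) * L ^ (m + 3)))"
proof -
  have "has_class (m + 8) (\<lambda>y. y 0 = 0 \<and> y 4 = 0 \<and> y 3 = 0 \<and> y 1 = 0 \<and> 2 * y 2 * y 5 = 0)
      (Lclass (L ^ (m + 3) + (L - 1) * L ^ (m + 2)))"
  proof (rule has_class_split[where f = "\<lambda>y. y 2"])
    show "has_class (m + 8) (\<lambda>y. y 0 = 0 \<and> y 4 = 0 \<and> y 3 = 0 \<and> y 1 = 0 \<and> y 2 = 0)
        (Lclass (L ^ (m + 3)))"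
      by (rule has_class_coord_stratum_cong[of "{0, 1, 2, 3, 4}" "{}"])
        (auto simp: add.commute)
    show "has_class (m + 8) (\<lambda>y. y 0 = 0 \<and> y 4 = 0 \<and> y 3 = 0 \<and> y 1 = 0 \<and> y 5 = 0 \<and> y 2 \<noteq> 0)
        (Lclass ((L - 1) * L ^ (m + 2)))"
      by (rule has_class_coord_stratum_cong[of "{0, 1, 3, 4, 5}" "{2}"])
        (auto simp: add.commute)
  qed (auto intro!: locclosed_locus_intros polyfun_intros simp del: mult_eq_0_iff, auto?)
  moreover have "has_class (m + 8) (\<lambda>y. y 0 = 0 \<and> y 4 = 0 \<and> y 3 = 0 \<and> y 1 \<noteq> 0 \<and>
      2 * y 1 * y 6 + 2 * y 2 * y 5 = 0) (Lclass ((L - 1) * L ^ (m + 3)))"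
  proof (rule has_class_trans[OF has_class_graph[where n = "m + 7" and k = 6
        and c = "\<lambda>z. 2 * z 1" and d = "\<lambda>z. 2 * z 2 * z 5"
        and P = "\<lambda>z. z 0 = 0 \<and> z 4 = 0 \<and> z 3 = 0 \<and> z 1 \<noteq> 0"]])
    show "has_class (m + 7) (\<lambda>z. z 0 = 0 \<and> z 4 = 0 \<and> z 3 = 0 \<and> z 1 \<noteq> 0)
        (Lclass ((L - 1) * L ^ (m + 3)))"
      by (rule has_class_coord_stratum_cong[of "{0, 3, 4}" "{1}"])
        (auto simp: add.commute)
  qed (auto simp: del_coord_def algebra_simps intro!: polyfun_intros locclosed_locus_intros)
  ultimately show ?thesis
    by (rule has_class_split[where f = "\<lambda>y. y 1"])
      (auto intro!: polyfun_intros locclosed_locus_intros)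
qed

lemma has_class_quadric_cone_6:
  "has_class (m + 8) (\<lambda>y. y 0 = 0 \<and> y 4 = 0 \<and> y 3 * y 7 + 2 * y 1 * y 6 + 2 * y 2 * y 5 = 0)
     (Lclass (L ^ (m + 3) + (L - 1) * L ^ (m + 2) + (L - 1) * L ^ (m + 3) + (L - 1) * L ^ (m + 4)))"
proof -
  have "has_class (m + 8) (\<lambda>y. y 0 = 0 \<and> y 4 = 0 \<and> y 3 \<noteq> 0 \<and>
      y 3 * y 7 + 2 * y 1 * y 6 + 2 * y 2 * y 5 = 0) (Lclass ((L - 1) * L ^ (m + 4)))"
  proof (rule has_class_trans[OF has_class_graph[where n = "m + 7" and k = 7
        and c = "\<lambda>z. z 3" and d = "\<lambda>z. 2 * z 1 * z 6 + 2 * z 2 * z 5"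
        and P = "\<lambda>z. z 0 = 0 \<and> z 4 = 0 \<and> z 3 \<noteq> 0"]])
    show "has_class (m + 7) (\<lambda>z. z 0 = 0 \<and> z 4 = 0 \<and> z 3 \<noteq> 0) (Lclass ((L - 1) * L ^ (m + 4)))"
      by (rule has_class_coord_stratum_cong[of "{0, 4}" "{3}"])
        (auto simp: add.commute)
  qed (auto simp: del_coord_def algebra_simps intro!: polyfun_intros locclosed_locus_intros)
  with has_class_quadric_cone_4 show ?thesis
    by (rule has_class_split[where f = "\<lambda>y. y 3"])
      (auto intro!: polyfun_intros locclosed_locus_intros)
qed

lemma locclosed_locus_anticommuting_tc: "8 \<le> n \<Longrightarrow> locclosed n (locus n anticommuting_tc)"
  unfolding anticommuting_tc_def by (intro locclosed_locus_intros polyfun_intros; simp)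

lemma has_class_anticommuting_tc_trace_zero:
  "has_class (m + 8) (\<lambda>y. y 0 = 0 \<and> anticommuting_tc y)
     (Lclass ((L ^ (m + 3) + (L - 1) * L ^ (m + 2) + (L - 1) * L ^ (m + 3) + (L - 1) * L ^ (m + 4))
       + (L - 1) * L ^ (m + 3)))"
proof (rule has_class_split[OF has_class_quadric_cone_6, where f = "\<lambda>y. y 4"])
  show "has_class (m + 8) (\<lambda>y. y 0 = 0 \<and> y 1 = 0 \<and> y 2 = 0 \<and> y 3 = 0 \<and> y 4 \<noteq> 0)
      (Lclass ((L - 1) * L ^ (m + 3)))"
    by (rule has_class_coord_stratum_cong[of "{0, 1, 2, 3}" "{4}"])
      (auto simp: add.commute)
qed (auto simp: anticommuting_tc_def
    intro!: locclosed_locus_intros locclosed_locus_anticommuting_tc polyfun_intros)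

lemma anticommuting_tc_trace_nonzero_iff:
  assumes "y 0 \<noteq> 0"
  shows "anticommuting_tc y \<longleftrightarrow> y 4 * (y 0 ^ 2 - y 3 ^ 2 - 4 * y 1 * y 2) = 0
    \<and> y 0 * y 5 + y 4 * y 1 = 0 \<and> y 0 * y 6 + y 4 * y 2 = 0 \<and> y 0 * y 7 + y 4 * y 3 = 0"
proof -
  have "y 0 * (y 0 * y 4 + y 3 * y 7 + 2 * y 1 * y 6 + 2 * y 2 * y 5)
      = y 4 * (y 0 ^ 2 - y 3 ^ 2 - 4 * y 1 * y 2) + y 3 * (y 0 * y 7 + y 4 * y 3)
        + 2 * y 1 * (y 0 * y 6 + y 4 * y 2) + 2 * y 2 * (y 0 * y 5 + y 4 * y 1)"
    by (simp add: algebra_simps power2_eq_square)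
  with assms show ?thesis unfolding anticommuting_tc_def by (auto simp: add.commute)
qed

lemma diff_squares_eq_0_neq_iff:
  fixes a b :: complex
  assumes "a \<noteq> 0"
  shows "a ^ 2 - b ^ 2 = 0 \<and> b - a \<noteq> 0 \<longleftrightarrow> b + a = 0"
proof -
  have "a ^ 2 - b ^ 2 = - ((b - a) * (b + a))" by (simp add: algebra_simps power2_eq_square)
  moreover have "b + a = 0 \<Longrightarrow> b - a \<noteq> 0" using assms by (auto simp: add_eq_0_iff)
  ultimately show ?thesis by auto
qed

lemma has_class_two_lines:
  "has_class (m + 5) (\<lambda>y. y 0 \<noteq> 0 \<and> y 4 \<noteq> 0 \<and> y 1 = 0 \<and> y 0 ^ 2 - y 3 ^ 2 = 0)
     (Lclass ((L - 1) ^ 2 * L ^ (m + 1) + (L - 1) ^ 2 * L ^ (m + 1)))"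
proof -
  have base: "has_class (m + 4) (\<lambda>z. z 0 \<noteq> 0 \<and> z 3 \<noteq> 0 \<and> z 1 = 0)
      (Lclass ((L - 1) ^ 2 * L ^ (m + 1)))"
    by (rule has_class_coord_stratum_cong[of "{1}" "{0, 3}"])
      (auto simp: add.commute power2_eq_square)
  have "has_class (m + 5) (\<lambda>y. y 0 \<noteq> 0 \<and> y 4 \<noteq> 0 \<and> y 1 = 0 \<and> y 3 - y 0 = 0)
      (Lclass ((L - 1) ^ 2 * L ^ (m + 1)))"
    by (rule has_class_trans[OF has_class_graph[where n = "m + 4" and k = 3
          and c = "\<lambda>z. 1" and d = "\<lambda>z. - z 0"] base])
      (auto simp: del_coord_def intro!: polyfun_intros locclosed_locus_intros)
  moreover have "has_class (m + 5) (\<lambda>y. y 0 \<noteq> 0 \<and> y 4 \<noteq> 0 \<and> y 1 = 0 \<and> y 3 + y 0 = 0)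
      (Lclass ((L - 1) ^ 2 * L ^ (m + 1)))"
    by (rule has_class_trans[OF has_class_graph[where n = "m + 4" and k = 3
          and c = "\<lambda>z. 1" and d = "\<lambda>z. z 0"] base])
      (auto simp: del_coord_def intro!: polyfun_intros locclosed_locus_intros)
  ultimately show ?thesis
  proof (rule has_class_split[where f = "\<lambda>y. y 3 - y 0"])
    show "locclosed (m + 5)
        (locus (m + 5) (\<lambda>y. y 0 \<noteq> 0 \<and> y 4 \<noteq> 0 \<and> y 1 = 0 \<and> y 0 ^ 2 - y 3 ^ 2 = 0))"
      by (intro locclosed_locus_intros polyfun_intros; simp)
    show "(\<lambda>y. y 3 - y 0) \<in> polyfun (m + 5)" by (intro polyfun_intros; simp)
    fix y :: pt
    show "(y 0 \<noteq> 0 \<and> y 4 \<noteq> 0 \<and> y 1 = 0 \<and> y 3 + y 0 = 0) \<longleftrightarrow>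
        (y 0 \<noteq> 0 \<and> y 4 \<noteq> 0 \<and> y 1 = 0 \<and> y 0 ^ 2 - y 3 ^ 2 = 0) \<and> y 3 - y 0 \<noteq> 0"
      using diff_squares_eq_0_neq_iff[of "y 0" "y 3"] by auto
  qed auto
qed

lemma has_class_punctured_conic:
  "has_class (m + 5) (\<lambda>y. y 0 \<noteq> 0 \<and> y 4 \<noteq> 0 \<and> y 0 ^ 2 - y 3 ^ 2 - 4 * y 1 * y 2 = 0)
     (Lclass ((L - 1) ^ 2 * L ^ (m + 1) + (L - 1) ^ 2 * L ^ (m + 1) + (L - 1) ^ 3 * L ^ (m + 1)))"
proof -
  have "has_class (m + 5) (\<lambda>y. y 0 \<noteq> 0 \<and> y 4 \<noteq> 0 \<and> y 1 \<noteq> 0 \<and>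
      y 0 ^ 2 - y 3 ^ 2 - 4 * y 1 * y 2 = 0) (Lclass ((L - 1) ^ 3 * L ^ (m + 1)))"
  proof (rule has_class_trans[OF has_class_graph[where n = "m + 4" and k = 2
        and c = "\<lambda>z. - 4 * z 1" and d = "\<lambda>z. z 0 ^ 2 - z 2 ^ 2"
        and P = "\<lambda>z. z 0 \<noteq> 0 \<and> z 3 \<noteq> 0 \<and> z 1 \<noteq> 0"]])
    show "has_class (m + 4) (\<lambda>z. z 0 \<noteq> 0 \<and> z 3 \<noteq> 0 \<and> z 1 \<noteq> 0) (Lclass ((L - 1) ^ 3 * L ^ (m + 1)))"
      by (rule has_class_coord_stratum_cong[of "{}" "{0, 1, 3}"])
        (auto simp: add.commute power3_eq_cube)
  qed (auto simp: del_coord_def algebra_simps intro!: polyfun_intros locclosed_locus_intros)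
  with has_class_two_lines show ?thesis
    by (rule has_class_split[where f = "\<lambda>y. y 1"])
      (auto intro!: locclosed_locus_intros polyfun_intros simp del: mult_eq_0_iff, auto?)
qed

lemma has_class_discriminant_locus:
  "has_class (m + 5) (\<lambda>y. y 0 \<noteq> 0 \<and> y 4 * (y 0 ^ 2 - y 3 ^ 2 - 4 * y 1 * y 2) = 0)
     (Lclass ((L - 1) * L ^ (m + 3)
       + ((L - 1) ^ 2 * L ^ (m + 1) + (L - 1) ^ 2 * L ^ (m + 1) + (L - 1) ^ 3 * L ^ (m + 1))))"
proof -
  have "has_class (m + 5) (\<lambda>y. y 0 \<noteq> 0 \<and> y 4 = 0) (Lclass ((L - 1) * L ^ (m + 3)))"
    by (rule has_class_coord_stratum_cong[of "{4}" "{0}"])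
      (auto simp: add.commute)
  from this has_class_punctured_conic show ?thesis
    by (rule has_class_split[where f = "\<lambda>y. y 4"])
      (auto intro!: locclosed_locus_intros polyfun_intros simp del: mult_eq_0_iff, auto?)
qed

lemma has_class_anticommuting_tc_trace_nonzero:
  "has_class (m + 8) (\<lambda>y. y 0 \<noteq> 0 \<and> anticommuting_tc y)
     (Lclass ((L - 1) * L ^ (m + 3)
       + ((L - 1) ^ 2 * L ^ (m + 1) + (L - 1) ^ 2 * L ^ (m + 1) + (L - 1) ^ 3 * L ^ (m + 1))))"
proof -
  let ?p = "(L - 1) * L ^ (m + 3)
    + ((L - 1) ^ 2 * L ^ (m + 1) + (L - 1) ^ 2 * L ^ (m + 1) + (L - 1) ^ 3 * L ^ (m + 1))"
  let ?D = "\<lambda>y. y 0 \<noteq> 0 \<and> y 4 * (y 0 ^ 2 - y 3 ^ 2 - 4 * y 1 * y 2) = 0"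
  have "has_class (m + 6) (\<lambda>y. ?D y \<and> y 0 * y 5 + y 4 * y 1 = 0) (Lclass ?p)"
    by (rule has_class_trans[OF has_class_graph[where n = "m + 5" and k = 5
          and c = "\<lambda>z. z 0" and d = "\<lambda>z. z 4 * z 1" and P = ?D] has_class_discriminant_locus])
      (auto simp: del_coord_def algebra_simps simp del: mult_eq_0_iff
        intro!: polyfun_intros locclosed_locus_intros)
  then have "has_class (m + 7) (\<lambda>y. ?D y \<and> y 0 * y 5 + y 4 * y 1 = 0 \<and> y 0 * y 6 + y 4 * y 2 = 0)
      (Lclass ?p)"
    by (rule has_class_trans[OF has_class_graph[where n = "m + 6" and k = 6
          and c = "\<lambda>z. z 0" and d = "\<lambda>z. z 4 * z 2"], rotated -1])
      (auto simp: del_coord_def algebra_simps simp del: mult_eq_0_iff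
        intro!: polyfun_intros locclosed_locus_intros)
  then have "has_class (m + 8) (\<lambda>y. ?D y \<and> y 0 * y 5 + y 4 * y 1 = 0 \<and> y 0 * y 6 + y 4 * y 2 = 0
      \<and> y 0 * y 7 + y 4 * y 3 = 0) (Lclass ?p)"
    by (rule has_class_trans[OF has_class_graph[where n = "m + 7" and k = 7
          and c = "\<lambda>z. z 0" and d = "\<lambda>z. z 4 * z 3"], rotated -1])
      (auto simp: del_coord_def algebra_simps simp del: mult_eq_0_iff
        intro!: polyfun_intros locclosed_locus_intros)
  then show ?thesis
    by (rule has_class_cong) (auto simp: anticommuting_tc_trace_nonzero_iff)
qed

definition anticommuting_class :: "int poly" where
  "anticommuting_class = L ^ 5 + 3 * L ^ 4 - 2 * L ^ 3 - 2 * L ^ 2 + L"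

lemma has_class_anticommuting_tc:
  "has_class (m + 8) anticommuting_tc (Lclass (anticommuting_class * L ^ m))"
proof -
  let ?p = "(L ^ (m + 3) + (L - 1) * L ^ (m + 2) + (L - 1) * L ^ (m + 3) + (L - 1) * L ^ (m + 4)
      + (L - 1) * L ^ (m + 3))
    + ((L - 1) * L ^ (m + 3)
      + ((L - 1) ^ 2 * L ^ (m + 1) + (L - 1) ^ 2 * L ^ (m + 1) + (L - 1) ^ 3 * L ^ (m + 1)))"
  have "has_class (m + 8) anticommuting_tc (Lclass ?p)"
    using has_class_anticommuting_tc_trace_zero has_class_anticommuting_tc_trace_nonzero
    by (rule has_class_split[where f = "\<lambda>y. y 0"])
      (auto intro!: locclosed_locus_anticommuting_tc polyfun_intros)
  moreover have "?p = anticommuting_class * L ^ m"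
    by (simp add: anticommuting_class_def power_add algebra_simps power2_eq_square power3_eq_cube
        eval_nat_numeral)
  ultimately show ?thesis by simp
qed

lemma has_class_anticommuting:
  "has_class (m + 8) anticommuting (Lclass (anticommuting_class * L ^ m))"
proof (rule has_class_trans[OF _ has_class_anticommuting_tc])
  let ?n = "m + 8"
  have "locclosed ?n (locus ?n (\<lambda>x. \<forall>r\<in>{..<4}. trW_coeff r x = 0))"
    by (intro locclosed_locus_all_zero polyfun_trW_coeff) auto
  then have lc: "locclosed ?n (locus ?n anticommuting)"
    by (simp add: anticommuting_def[abs_def] Ball_def lessThan_iff)
  have aff: "trace_coords x \<in> aff ?n" "trace_coords_inv x \<in> aff ?n" if "x \<in> aff ?n" for x
    using that by (auto simp: aff_def trace_coords_def trace_coords_inv_def)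
  have "isomorphic ?n (locus ?n anticommuting) ?n (locus ?n anticommuting_tc)"
    unfolding isomorphic_def
  proof (intro exI conjI)
    show "morphism ?n (locus ?n anticommuting) ?n (locus ?n anticommuting_tc) trace_coords"
      by (rule morphism_polyfun)
        (auto simp: locus_def anticommuting_tc_trace_coords aff polyfun_trace_coords)
    show "morphism ?n (locus ?n anticommuting_tc) ?n (locus ?n anticommuting) trace_coords_inv"
      by (rule morphism_polyfun)
        (auto simp: locus_def aff polyfun_trace_coords
          simp flip: anticommuting_tc_trace_coords[of "trace_coords_inv _"])
  qed simp_all
  from rels.rel_iso[OF lc locclosed_locus_anticommuting_tc this]
  show "has_class ?n anticommuting (gen ?n (locus ?n anticommuting_tc))"
    unfolding has_class_def K0_eq_def by simp
qed

lemma K0_eq_MW_1: "K0_eq (gen 12 (MW 1)) (Lclass (L ^ 11 - anticommuting_class * L ^ 3))"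
proof -
  have "has_class 12 (\<lambda>x. trW x = 1 \<and> anticommuting x) (Lclass 0)"
    by (rule has_class_cong[OF has_class_empty]) (auto dest: trW_anticommuting)
  from K0_eq_MW[OF has_class_anticommuting[of 3, simplified] this] show ?thesis
    by (simp add: Lclass_diff Lclass_0)
qed

lemma K0_eq_MW_0:
  "K0_eq (gen 12 (MW 0))
    (Lclass (L ^ 11 - anticommuting_class * L ^ 3 + anticommuting_class * L ^ 4))"
proof -
  have "has_class 12 (\<lambda>x. trW x = 0 \<and> anticommuting x) (Lclass (anticommuting_class * L ^ 4))"
    by (rule has_class_cong[OF has_class_anticommuting[of 4, simplified]])
      (auto dest: trW_anticommuting)
  from K0_eq_MW[OF has_class_anticommuting[of 3, simplified] this] show ?thesis
    by (simp add: Lclass_diff Lclass_add)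
qed

theorem mainTheorem6:
  shows "K0_eq (gen 12 (MW 1)) (Lpoly [(11, 1), (8, -1), (7, -3), (6, 2), (5, 2), (4, -1)])
       \<and> K0_eq (gen 12 (MW 0)) (Lpoly [(11, 1), (9, 1), (8, 2), (7, -5), (5, 3), (4, -1)])
       \<and> K0_eq (\<lambda>v. gen 12 (MW 0) v - gen 12 (MW 1) v)
               (Lpoly [(9, 1), (8, 3), (7, -2), (6, -2), (5, 1)])"
proof -
  have diff: "K0_eq (\<lambda>v. gen 12 (MW 0) v - gen 12 (MW 1) v) (Lclass (anticommuting_class * L ^ 4))"
    using K0_diff[OF K0_eq_MW_0 K0_eq_MW_1] unfolding Lclass_diff[symmetric] by simp
  have coeffs:
    "(\<Sum>(k, c)\<leftarrow>[(11, 1), (8, -1), (7, -3), (6, 2), (5, 2), (4, -1)]. of_int c * L ^ k)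
      = L ^ 11 - anticommuting_class * L ^ 3"
    "(\<Sum>(k, c)\<leftarrow>[(11, 1), (9, 1), (8, 2), (7, -5), (5, 3), (4, -1)]. of_int c * L ^ k)
      = L ^ 11 - anticommuting_class * L ^ 3 + anticommuting_class * L ^ 4"
    "(\<Sum>(k, c)\<leftarrow>[(9, 1), (8, 3), (7, -2), (6, -2), (5, 1)]. of_int c * L ^ k)
      = anticommuting_class * L ^ 4"
    by (simp add: anticommuting_class_def; algebra)+
  show ?thesis
    unfolding Lpoly_eq_Lclass coeffs using K0_eq_MW_1 K0_eq_MW_0 diff by blast
qed

end
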